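(* Let $S_1,S_2\subseteq\mathbb{F}_q$ with $\#S_1=\#S_2=s$, let $\sigma\in\{0,\dots,s-1\}$, and let $\ell$ be a positive integer with $\ell\le\sigma+1$ such that $\ell$ is even if and only if $\sigma$ is odd. Then: (1) There exist $L_2\subsetneq L_1\subseteq\Delta(s,s)$ (namely those of the form $L_1=\{N\mid N\preceq_{\deg}X^iY^j\}$, $L_2=\{N\mid N\prec_{\deg}X^jY^i\}$ with $i=\frac{\sigma-\ell+1}{2}$, $j=\frac{\sigma+\ell-1}{2}$) with $\#L_1-\#L_2=\ell$ and $$M_1(C(L_1),C(L_2))=\Big(s-\tfrac{\sigma-\ell+1}{2}\Big)\Big(s-\tfrac{\sigma+\ell-1}{2}\Big),\quad M_1(C(L_2)^\perp,C(L_1)^\perp)\ge\Big(\tfrac{\sigma-\ell+3}{2}\Big)\Big(\tfrac{\sigma+\ell+1}{2}\Big),$$ and if $\ell\le\sigma-1$ then $d(C(L_1))=s(s-\sigma)<M_1(C(L_1),C(L_2))$. (2) There exist $L_2\subsetneq L_1\subseteq\Delta(s,s)$ with $\#L_1-\#L_2=\ell$ and $$M_1(C(L_1),C(L_2))=\Big(\tfrac{\sigma-\ell+3}{2}\Big)\Big(\tfrac{\sigma+\ell+1}{2}\Big),\quad M_1(C(L_2)^\perp,C(L_1)^\perp)\ge\Big(s-\tfrac{\sigma-\ell+1}{2}\Big)\Big(s-\tfrac{\sigma+\ell-1}{2}\Big),$$ and if $\ell\le\sigma-1$ then $d(C(L_1))=\sigma+1<M_1(C(L_1),C(L_2))$.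
   Context: $q$ is a prime power. $S_1\times S_2=\{\alpha_1,\dots,\alpha_n\}$, $n=s^2$. $\Delta(s,s)=\{X^aY^b\mid 0\le a,b<s\}$. For $L\subseteq\Delta(s,s)$, $C(L)\subseteq\mathbb{F}_q^n$ is the span of $(N(\alpha_1),\dots,N(\alpha_n))$, $N\in L$; $C^\perp$ is the Euclidean dual; $d(C)$ is the minimum Hamming distance. $\prec_{\deg}$: $X^aY^b\prec_{\deg}X^cY^d$ iff $a+b<c+d$, or $a+b=c+d$ and $b<d$. For linear codes $C_2\subsetneq C_1$, $M_1(C_1,C_2)=\min\{w_H(\vec c)\mid \vec c\in C_1\setminus C_2\}$. *)

theory Defs
  imports Main
begin

(* Monomials X^a Y^b are represented by their exponent pairs (a,b). *)
definition Delta :: "nat \<Rightarrow> (nat \<times> nat) set" where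
  "Delta s = {(a, b). a < s \<and> b < s}"

definition deg_less :: "nat \<times> nat \<Rightarrow> nat \<times> nat \<Rightarrow> bool" where
  "deg_less N M \<longleftrightarrow> fst N + snd N < fst M + snd M
     \<or> (fst N + snd N = fst M + snd M \<and> snd N < snd M)"

definition deg_le :: "nat \<times> nat \<Rightarrow> nat \<times> nat \<Rightarrow> bool" where
  "deg_le N M \<longleftrightarrow> deg_less N M \<or> N = M"

(* Vectors of F_q^n, indexed by the points of S1 \<times> S2, are functions that vanish
   outside S1 \<times> S2. *)
definition ambient :: "'a set \<Rightarrow> 'a set \<Rightarrow> ('a \<times> 'a \<Rightarrow> 'b::zero) set" where
  "ambient S1 S2 = {v. \<forall>p. p \<notin> S1 \<times> S2 \<longrightarrow> v p = 0}"

definition evcode :: "'a::field set \<Rightarrow> 'a set \<Rightarrow> (nat \<times> nat) set \<Rightarrow> ('a \<times> 'a \<Rightarrow> 'a) set" where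
  "evcode S1 S2 L = {c. \<exists>f :: nat \<times> nat \<Rightarrow> 'a.
      c = (\<lambda>p. if p \<in> S1 \<times> S2
               then (\<Sum>m\<in>L. f m * fst p ^ fst m * snd p ^ snd m) else 0)}"

definition dual :: "'a::field set \<Rightarrow> 'a set \<Rightarrow> ('a \<times> 'a \<Rightarrow> 'a) set \<Rightarrow> ('a \<times> 'a \<Rightarrow> 'a) set" where
  "dual S1 S2 C = {v \<in> ambient S1 S2. \<forall>c\<in>C. (\<Sum>p\<in>S1 \<times> S2. v p * c p) = 0}"

definition hweight :: "'a set \<Rightarrow> 'a set \<Rightarrow> ('a \<times> 'a \<Rightarrow> 'b::zero) \<Rightarrow> nat" where
  "hweight S1 S2 c = card {p \<in> S1 \<times> S2. c p \<noteq> 0}"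

definition min_dist :: "'a set \<Rightarrow> 'a set \<Rightarrow> ('a \<times> 'a \<Rightarrow> 'b::zero) set \<Rightarrow> nat" where
  "min_dist S1 S2 C = Min (hweight S1 S2 ` (C - {\<lambda>_. 0}))"

definition M1 :: "'a set \<Rightarrow> 'a set \<Rightarrow> ('a \<times> 'a \<Rightarrow> 'b::zero) set \<Rightarrow> ('a \<times> 'a \<Rightarrow> 'b) set \<Rightarrow> nat" where
  "M1 S1 S2 C1 C2 = Min (hweight S1 S2 ` (C1 - C2))"

end

theory Submission
  imports Defs "HOL-Computational_Algebra.Polynomial" "HOL-Library.Product_Plus"
begin

(* A polynomial supported on Delta(s,s) whose leading monomial for the degree order is X^a Y^b
   has at least (s - a) (s - b) nonzero values on S1 x S2: otherwise some nonzero combination of the monomials X^c Y^d with c < s - a,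
   d < s - b vanishes on the set of its nonzero values, and their product, reduced to normal form
   on the grid, is a nonzero polynomial supported on Delta(s,s) that vanishes on the whole grid.
   Dually, a vector orthogonal to all monomials below X^a Y^b but not to X^a Y^b has weight at least
   (a + 1) (b + 1).  Products of linear factors attain the first bound, and products of functionals
   on S1 and S2 separate the dual codes.  For L1 = {N. N <=deg X^a Y^b}, L2 = {N. N <deg X^b Y^a}
   with a <= b, the difference L1 - L2 is the antidiagonal segment from X^b Y^a to X^a Y^b, and both
   bounds are smallest at its end points.  The two parts of the theorem are the cases
   (a, b) = (i, j) and (a, b) = (s-1-j, s-1-i). *)

declare split_paired_All [simp del] split_paired_Ex [simp del]

section \<open>Linear algebra and polynomials in one variable\<close>

lemma prod_linear_factors_expand:
  fixes A :: "'a::field set"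
  assumes "finite A"
  obtains \<gamma> where "\<gamma> (card A) = 1" "\<And>x. (\<Prod>u\<in>A. x - u) = (\<Sum>t\<le>card A. \<gamma> t * x ^ t)"
proof
  define Q where "Q = (\<Prod>u\<in>A. [:-u, 1:])"
  have deg: "degree Q = card A"
    unfolding Q_def by (subst degree_prod_eq_sum_degree) auto
  show "coeff Q (card A) = 1"
    using lead_coeff_prod[of "\<lambda>u. [:-u, 1:]" A] deg unfolding Q_def by simp
  fix x
  have "poly Q x = (\<Prod>u\<in>A. x - u)" unfolding Q_def by (simp add: poly_prod)
  then show "(\<Prod>u\<in>A. x - u) = (\<Sum>t\<le>card A. coeff Q t * x ^ t)"
    using poly_altdef[of Q x] deg by simp
qed

lemma coeffs_zero_if_vanishing_on_card:
  fixes S :: "'a::field set"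
  assumes "finite S" "\<And>x. x \<in> S \<Longrightarrow> (\<Sum>k<card S. a k * x ^ k) = 0" "k < card S"
  shows "a k = 0"
proof -
  define p where "p = (\<Sum>k<card S. monom (a k) k)"
  have eval: "poly p x = (\<Sum>k<card S. a k * x ^ k)" for x
    unfolding p_def by (simp add: poly_sum poly_monom)
  have "p = 0"
  proof (rule ccontr)
    assume "p \<noteq> 0"
    have "degree p < card S"
      unfolding p_def using assms(3)
      by (intro degree_sum_less) (auto intro: le_less_trans[OF degree_monom_le])
    moreover have "card S \<le> card {x. poly p x = 0}"
      using assms(2) eval by (intro card_mono poly_roots_finite \<open>p \<noteq> 0\<close>) auto
    ultimately show False using card_poly_roots_bound[OF \<open>p \<noteq> 0\<close>] by linarith
  qed
  moreover have "coeff p k = a k"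
    unfolding p_def coeff_sum using assms(3) by (simp add: coeff_monom)
  ultimately show ?thesis by simp
qed

lemma power_card_as_lower_powers:
  fixes S :: "'a::field set"
  assumes "finite S"
  obtains \<alpha> where "\<And>x. x \<in> S \<Longrightarrow> x ^ card S = (\<Sum>k<card S. \<alpha> k * x ^ k)"
proof -
  obtain \<gamma> where \<gamma>: "\<gamma> (card S) = 1" "\<And>x. (\<Prod>u\<in>S. x - u) = (\<Sum>t\<le>card S. \<gamma> t * x ^ t)"
    using prod_linear_factors_expand[OF assms] by blast
  have "x ^ card S = (\<Sum>k<card S. - \<gamma> k * x ^ k)" if "x \<in> S" for x
  proof -
    have "(\<Prod>u\<in>S. x - u) = 0" using assms that by (intro prod_zero) auto
    then have "x ^ card S + (\<Sum>t<card S. \<gamma> t * x ^ t) = 0"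
      by (simp add: \<gamma> lessThan_Suc_atMost[symmetric] add.commute)
    then show ?thesis by (simp add: sum_negf eq_neg_iff_add_eq_0)
  qed
  then show thesis by (rule that)
qed

lemma nontrivial_solution_if_card_less:
  fixes \<phi> :: "'e \<Rightarrow> 'p \<Rightarrow> 'a::field"
  assumes "finite X" "finite E" "card X < card E"
  shows "\<exists>w. (\<exists>e\<in>E. w e \<noteq> 0) \<and> (\<forall>p\<in>X. (\<Sum>e\<in>E. w e * \<phi> e p) = 0)"
  using assms
proof (induction X arbitrary: E \<phi> rule: finite_induct)
  case empty
  then show ?case by (intro exI[of _ "\<lambda>_. 1"]) (auto simp: card_gt_0_iff)
next
  case (insert p X)
  show ?case
  proof (cases "\<forall>e\<in>E. \<phi> e p = 0")
    case True
    with insert show ?thesis by fastforce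
  next
    case False
    then obtain e0 where e0: "e0 \<in> E" "\<phi> e0 p \<noteq> 0" by auto
    define E' where "E' = E - {e0}"
    \<comment> \<open>Gaussian elimination of the equation at p, with pivot e0\<close>
    define \<psi> where "\<psi> e q = \<phi> e q - \<phi> e p / \<phi> e0 p * \<phi> e0 q" for e q
    have "card X < card E'" unfolding E'_def using insert e0 by auto
    with insert.IH[of E' \<psi>] insert.prems obtain w where
      w: "\<exists>e\<in>E'. w e \<noteq> 0" "\<forall>q\<in>X. (\<Sum>e\<in>E'. w e * \<psi> e q) = 0" by (auto simp: E'_def)
    define Sp where "Sp = (\<Sum>e\<in>E'. w e * \<phi> e p)"
    define \<mu> where "\<mu> e = (if e = e0 then - Sp / \<phi> e0 p else w e)" for e
    have split: "(\<Sum>e\<in>E. \<mu> e * \<phi> e q) = \<mu> e0 * \<phi> e0 q + (\<Sum>e\<in>E'. w e * \<phi> e q)" for q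
      unfolding E'_def using e0 insert.prems
      by (simp add: sum.remove \<mu>_def)
    have "(\<Sum>e\<in>E. \<mu> e * \<phi> e q) = 0" if "q \<in> insert p X" for q
    proof (cases "q = p")
      case True
      then show ?thesis using e0 unfolding split by (simp add: \<mu>_def Sp_def)
    next
      case False
      with that w(2) have "0 = (\<Sum>e\<in>E'. w e * \<psi> e q)" by auto
      also have "\<dots> = (\<Sum>e\<in>E'. w e * \<phi> e q) - Sp / \<phi> e0 p * \<phi> e0 q"
        unfolding \<psi>_def Sp_def
        by (simp add: right_diff_distrib sum_subtractf sum_distrib_left sum_distrib_right
            sum_divide_distrib algebra_simps)
      also have "\<dots> = (\<Sum>e\<in>E. \<mu> e * \<phi> e q)" unfolding split by (simp add: \<mu>_def)
      finally show ?thesis by simp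
    qed
    moreover have "\<exists>e\<in>E. \<mu> e \<noteq> 0" using w(1) by (auto simp: \<mu>_def E'_def)
    ultimately show ?thesis by blast
  qed
qed

lemma exists_weights_vanishing_below:
  fixes S :: "'a::field set"
  assumes "finite S" "k < card S"
  obtains \<alpha> where "\<And>a. a < k \<Longrightarrow> (\<Sum>x\<in>S. \<alpha> x * x ^ a) = 0" "(\<Sum>x\<in>S. \<alpha> x * x ^ k) \<noteq> 0"
proof -
  obtain U where U: "U \<subseteq> S" "card U = k + 1" "finite U"
    using obtain_subset_with_card_n[of "k + 1" S] assms by auto
  obtain w where w: "\<exists>u\<in>U. w u \<noteq> 0" "\<forall>a\<in>{..<k}. (\<Sum>x\<in>U. w x * x ^ a) = 0"
    using nontrivial_solution_if_card_less[OF finite_lessThan U(3), where \<phi> = "\<lambda>x a. x ^ a"] U(2)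
    by (metis card_lessThan less_add_one)
  define \<alpha> where "\<alpha> x = (if x \<in> U then w x else 0)" for x
  have sum_\<alpha>: "(\<Sum>x\<in>S. \<alpha> x * x ^ a) = (\<Sum>x\<in>U. w x * x ^ a)" for a
    using U assms(1) by (intro sum.mono_neutral_cong_right) (auto simp: \<alpha>_def)
  have "(\<Sum>x\<in>U. w x * x ^ k) \<noteq> 0"
  proof
    assume "(\<Sum>x\<in>U. w x * x ^ k) = 0"
    with w(2) have vanish: "(\<Sum>x\<in>U. w x * x ^ a) = 0" if "a \<le> k" for a
      using that by (cases "a = k") auto
    obtain u where u: "u \<in> U" "w u \<noteq> 0" using w(1) by blast
    have fin: "finite (U - {u})" and card: "card (U - {u}) = k" using U u by auto
    \<comment> \<open>w then annihilates every polynomial of degree at most k, in particular this one\<close>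
    obtain \<gamma> where \<gamma>: "\<And>x. (\<Prod>t\<in>U - {u}. x - t) = (\<Sum>a\<le>k. \<gamma> a * x ^ a)"
      using prod_linear_factors_expand[OF fin] card by metis
    have "w u * (\<Prod>t\<in>U - {u}. u - t) = (\<Sum>x\<in>U. w x * (\<Prod>t\<in>U - {u}. x - t))"
      using U(3) u(1) fin by (subst sum.remove[of U u]) (auto intro!: sum.neutral prod_zero)
    also have "\<dots> = (\<Sum>a\<le>k. \<gamma> a * (\<Sum>x\<in>U. w x * x ^ a))"
      unfolding \<gamma> by (simp add: sum_distrib_left mult_ac sum.swap[of _ U])
    also have "\<dots> = 0" using vanish by simp
    finally show False using u fin by (simp add: prod_zero_iff)
  qed
  then show thesis using that[of \<alpha>] w(2) sum_\<alpha> by auto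
qed

lemma Min_eq_if_mutual_bounds:
  fixes A B :: "'a::linorder set"
  assumes "finite A" "finite B" "A \<noteq> {}" "B \<noteq> {}"
    and "\<And>a. a \<in> A \<Longrightarrow> \<exists>b\<in>B. b \<le> a" and "\<And>b. b \<in> B \<Longrightarrow> \<exists>a\<in>A. a \<le> b"
  shows "Min A = Min B"
proof (rule antisym)
  obtain a where "a \<in> A" "a \<le> Min B" using assms(6)[OF Min_in[OF assms(2,4)]] by blast
  then show "Min A \<le> Min B" using assms(1) by (meson Min_le order_trans)
next
  obtain b where "b \<in> B" "b \<le> Min A" using assms(5)[OF Min_in[OF assms(1,3)]] by blast
  then show "Min B \<le> Min A" using assms(2) by (meson Min_le order_trans)
qed

lemma mult_le_mult_of_same_sum:
  fixes A B u v :: nat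
  assumes "A \<le> u" "A \<le> v" "u + v = A + B"
  shows "A * B \<le> u * v"
proof -
  obtain p q where u: "u = A + p" and v: "v = A + q" using assms(1,2) le_Suc_ex by metis
  then have "B = A + p + q" using assms(3) by simp
  moreover have "(A + p) * (A + q) = A * (A + p + q) + p * q" by (simp add: algebra_simps)
  ultimately show ?thesis using u v by simp
qed

lemma diff_mult_diff_eq:
  fixes s x y :: nat
  assumes "x + y \<le> s"
  shows "(s - x) * (s - y) = s * (s - (x + y)) + x * y"
proof -
  obtain t where "s = x + y + t" using assms le_Suc_ex by blast
  then show ?thesis by (simp add: algebra_simps)
qed

lemma add_le_mult_add_one:
  fixes u v :: nat
  assumes "1 \<le> u" "1 \<le> v"
  shows "u + v \<le> u * v + 1"
proof -
  obtain p q where "u = p + 1" "v = q + 1" using assms by (metis add.commute le_Suc_ex)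
  then show ?thesis by (simp add: algebra_simps)
qed

lemma Min_image_eqI:
  assumes "finite A" "a \<in> A" "f a = y" "\<And>x. x \<in> A \<Longrightarrow> y \<le> f x"
  shows "(MIN x\<in>A. f x) = y"
  using assms by (intro Min_eqI) auto

section \<open>The degree order\<close>

(* Since snd m <= fst m + snd m, we have deg_rank m < (fst m + snd m + 1)^2, so deg_rank
   embeds the degree order into the order of nat. *)
definition deg_rank :: "nat \<times> nat \<Rightarrow> nat" where
  "deg_rank m = (fst m + snd m)\<^sup>2 + snd m"

lemma deg_rank_less_iff: "deg_rank N < deg_rank M \<longleftrightarrow> deg_less N M"
proof -
  have "deg_rank N < deg_rank M" if "fst N + snd N < fst M + snd M" for N M :: "nat \<times> nat"
  proof -
    have "deg_rank N < (fst N + snd N + 1)\<^sup>2" by (simp add: deg_rank_def power2_eq_square)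
    also have "\<dots> \<le> (fst M + snd M)\<^sup>2" using that by (intro power_mono) auto
    finally show ?thesis by (simp add: deg_rank_def)
  qed
  from this[of N M] this[of M N] show ?thesis
    by (cases "fst N + snd N" "fst M + snd M" rule: linorder_cases)
      (auto simp: deg_less_def deg_rank_def)
qed

lemma deg_rank_inj: "deg_rank N = deg_rank M \<Longrightarrow> N = M"
  using deg_rank_less_iff[of N M] deg_rank_less_iff[of M N]
  by (cases N, cases M) (auto simp: deg_less_def deg_rank_def)

lemma deg_rank_le_iff: "deg_rank N \<le> deg_rank M \<longleftrightarrow> deg_le N M"
  using deg_rank_less_iff[of N M] deg_rank_inj[of N M] by (auto simp: deg_le_def)

lemma deg_rank_le_imp_total_deg_le: "deg_rank N \<le> deg_rank M \<Longrightarrow> fst N + snd N \<le> fst M + snd M"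
  using deg_rank_less_iff[of M N] by (auto simp: deg_less_def)

lemma deg_rank_less_imp_less: "deg_rank N < deg_rank M \<Longrightarrow> fst N < fst M \<or> snd N < snd M"
  using deg_rank_less_iff[of N M] by (auto simp: deg_less_def)

lemma deg_rank_mono: "fst N \<le> fst M \<Longrightarrow> snd N \<le> snd M \<Longrightarrow> deg_rank N \<le> deg_rank M"
  unfolding deg_rank_le_iff deg_le_def deg_less_def by (cases N, cases M) auto

lemma deg_rank_add_mono:
  "deg_rank N \<le> deg_rank M \<Longrightarrow> deg_rank E \<le> deg_rank F \<Longrightarrow> deg_rank (N + E) \<le> deg_rank (M + F)"
  unfolding deg_rank_le_iff deg_le_def deg_less_def by auto

lemma deg_rank_add_strict_mono:
  "deg_rank N \<le> deg_rank M \<Longrightarrow> deg_rank E < deg_rank F \<Longrightarrow> deg_rank (N + E) < deg_rank (M + F)"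
  unfolding deg_rank_le_iff deg_rank_less_iff deg_le_def deg_less_def by auto

lemma deg_rank_between_iff:
  assumes "fst A + snd A = d" "fst B + snd B = d"
  shows "deg_rank A \<le> deg_rank N \<and> deg_rank N \<le> deg_rank B
    \<longleftrightarrow> fst N + snd N = d \<and> snd A \<le> snd N \<and> snd N \<le> snd B"
  using assms unfolding deg_rank_le_iff deg_le_def deg_less_def prod_eq_iff by linarith

lemma deg_rank_add_eq_imp_eq:
  assumes "deg_rank a \<le> deg_rank a0" "deg_rank b \<le> deg_rank b0" "a + b = a0 + b0"
  shows "a = a0 \<and> b = b0"
proof -
  have "\<not> deg_rank a < deg_rank a0"
    using deg_rank_add_strict_mono[OF assms(2)] assms(3) by (metis add.commute less_irrefl)
  then have "a = a0" using assms(1) deg_rank_inj by (meson le_neq_implies_less)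
  with assms(3) show ?thesis by simp
qed

lemma leading_coeff_of_product:
  fixes w P :: "nat \<times> nat \<Rightarrow> 'a::semiring_0"
  assumes "finite E" "finite D" "e0 \<in> E" "m \<in> D"
    and max_w: "\<And>e. e \<in> E \<Longrightarrow> w e \<noteq> 0 \<Longrightarrow> deg_rank e \<le> deg_rank e0"
    and max_P: "\<And>N. N \<in> D \<Longrightarrow> P N \<noteq> 0 \<Longrightarrow> deg_rank N \<le> deg_rank m"
  shows "(\<Sum>i\<in>{i \<in> E \<times> D. fst i + snd i = e0 + m}. w (fst i) * P (snd i)) = w e0 * P m"
proof -
  have "(\<Sum>i\<in>{i \<in> E \<times> D. fst i + snd i = e0 + m}. w (fst i) * P (snd i))
      = (\<Sum>i\<in>{(e0, m)}. w (fst i) * P (snd i))"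
  proof (rule sum.mono_neutral_right)
    show "finite {i \<in> E \<times> D. fst i + snd i = e0 + m}" using assms(1,2) by simp
    show "{(e0, m)} \<subseteq> {i \<in> E \<times> D. fst i + snd i = e0 + m}" using assms(3,4) by simp
    show "\<forall>i\<in>{i \<in> E \<times> D. fst i + snd i = e0 + m} - {(e0, m)}. w (fst i) * P (snd i) = 0"
    proof (rule ballI, rule ccontr)
      fix i assume i: "i \<in> {i \<in> E \<times> D. fst i + snd i = e0 + m} - {(e0, m)}"
        and nz: "w (fst i) * P (snd i) \<noteq> 0"
      from i have mem: "fst i \<in> E" "snd i \<in> D" and sum: "fst i + snd i = e0 + m" by auto
      from nz have "w (fst i) \<noteq> 0" "P (snd i) \<noteq> 0" by auto
      with mem have "fst i = e0 \<and> snd i = m"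
        using deg_rank_add_eq_imp_eq[OF max_w max_P sum] by blast
      with i show False by (simp add: prod_eq_iff)
    qed
  qed
  then show ?thesis by simp
qed

lemma exists_deg_rank_max:
  assumes "finite A" "A \<noteq> {}"
  obtains m where "m \<in> A" "\<And>e. e \<in> A \<Longrightarrow> deg_rank e \<le> deg_rank m"
proof -
  have "Max (deg_rank ` A) \<in> deg_rank ` A" using assms by (intro Max_in) auto
  then obtain m where "m \<in> A" "deg_rank m = Max (deg_rank ` A)" by auto
  then show thesis using that assms by simp
qed

lemma exists_deg_rank_min:
  assumes "finite A" "A \<noteq> {}"
  obtains m where "m \<in> A" "\<And>e. e \<in> A \<Longrightarrow> deg_rank m \<le> deg_rank e"
  using ex_is_arg_min_if_finite[OF assms, of deg_rank] unfolding is_arg_min_def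
  by (metis not_le)

section \<open>Normal forms on the grid\<close>

definition mon :: "nat \<times> nat \<Rightarrow> 'a \<times> 'a \<Rightarrow> 'a::field" where
  "mon m p = fst p ^ fst m * snd p ^ snd m"

lemma mon_add: "mon (e + m) p = mon e p * mon m p"
  by (simp add: mon_def power_add mult_ac)

lemma Delta_eq: "Delta s = {..<s} \<times> {..<s}"
  by (auto simp: Delta_def)

lemma finite_Delta [simp]: "finite (Delta s)"
  by (simp add: Delta_eq)

lemma exists_vanishing_combination:
  fixes X :: "('a::field \<times> 'a) set"
  assumes "finite X" "finite E" "card X < card E"
  obtains e0 w
  where "e0 \<in> E" "w e0 \<noteq> 0" "\<And>e. e \<in> E \<Longrightarrow> w e \<noteq> 0 \<Longrightarrow> deg_rank e \<le> deg_rank e0"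
    and "\<And>p. p \<in> X \<Longrightarrow> (\<Sum>e\<in>E. w e * mon e p) = 0"
proof -
  obtain w where w: "\<exists>e\<in>E. w e \<noteq> 0" "\<forall>p\<in>X. (\<Sum>e\<in>E. w e * mon e p) = 0"
    using nontrivial_solution_if_card_less[OF assms] by blast
  have "finite {e\<in>E. w e \<noteq> 0}" "{e\<in>E. w e \<noteq> 0} \<noteq> {}" using assms(2) w(1) by auto
  then obtain e0 where "e0 \<in> {e\<in>E. w e \<noteq> 0}"
    and "\<And>e. e \<in> {e\<in>E. w e \<noteq> 0} \<Longrightarrow> deg_rank e \<le> deg_rank e0"
    by (rule exists_deg_rank_max) (rule that)
  then show thesis using that[of e0 w] w(2) by blast
qed

locale grid =
  fixes S1 S2 :: "'a::field set" and s :: nat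
  assumes finite_S1: "finite S1" and finite_S2: "finite S2"
    and card_S1: "card S1 = s" and card_S2: "card S2 = s"
begin

lemma finite_grid: "finite (S1 \<times> S2)"
  using finite_S1 finite_S2 by simp

lemma coeff_zero_if_eval_vanishes:
  assumes vanish: "\<And>p. p \<in> S1 \<times> S2 \<Longrightarrow> (\<Sum>N\<in>Delta s. R N * mon N p) = 0"
    and "N \<in> Delta s"
  shows "R N = 0"
proof -
  obtain a b where N: "N = (a, b)" "a < s" "b < s" using assms(2) by (auto simp: Delta_def)
  have "(\<Sum>a<s. (\<Sum>b<s. R (a, b) * y ^ b) * x ^ a) = 0" if "x \<in> S1" "y \<in> S2" for x y
  proof -
    have "(\<Sum>a<s. (\<Sum>b<s. R (a, b) * y ^ b) * x ^ a) = (\<Sum>a<s. \<Sum>b<s. R (a, b) * mon (a, b) (x, y))"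
      by (simp add: sum_distrib_left sum_distrib_right mon_def mult_ac)
    also have "\<dots> = (\<Sum>N\<in>Delta s. R N * mon N (x, y))"
      unfolding Delta_eq sum.cartesian_product by (simp add: case_prod_beta)
    finally show ?thesis using vanish that by simp
  qed
  then have "(\<Sum>b<s. R (a, b) * y ^ b) = 0" if "y \<in> S2" for y
    using coeffs_zero_if_vanishing_on_card[OF finite_S1, of "\<lambda>a. \<Sum>b<s. R (a, b) * y ^ b" a]
      that card_S1 N by auto
  then show ?thesis
    using coeffs_zero_if_vanishing_on_card[OF finite_S2, of "\<lambda>b. R (a, b)" b] card_S2 N
    by (auto simp: mult.commute)
qed

lemma mon_reduction_step:
  assumes "M \<notin> Delta s"
  obtains Mk and \<alpha> :: "nat \<Rightarrow> 'a"
  where "\<And>k. k < s \<Longrightarrow> fst (Mk k) + snd (Mk k) < fst M + snd M"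
    and "\<And>p. p \<in> S1 \<times> S2 \<Longrightarrow> mon M p = (\<Sum>k<s. \<alpha> k * mon (Mk k) p)"
proof (cases "s \<le> fst M")
  case True
  obtain \<alpha> where \<alpha>: "\<And>x. x \<in> S1 \<Longrightarrow> x ^ s = (\<Sum>k<s. \<alpha> k * x ^ k)"
    using power_card_as_lower_powers[OF finite_S1] card_S1 by metis
  show thesis
  proof (rule that[of "\<lambda>k. (fst M - s + k, snd M)" \<alpha>])
    fix p assume p: "p \<in> S1 \<times> S2"
    have "mon M p = fst p ^ (fst M - s) * fst p ^ s * snd p ^ snd M"
      using True by (simp add: mon_def flip: power_add)
    also have "\<dots> = (\<Sum>k<s. \<alpha> k * mon (fst M - s + k, snd M) p)"
      using p by (simp add: \<alpha>[of "fst p"] mem_Times_iff mon_def power_add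
          sum_distrib_left sum_distrib_right mult_ac)
    finally show "mon M p = (\<Sum>k<s. \<alpha> k * mon (fst M - s + k, snd M) p)" .
  qed (use True in auto)
next
  case False
  then have le: "s \<le> snd M" using assms by (cases M) (auto simp: Delta_def)
  obtain \<alpha> where \<alpha>: "\<And>y. y \<in> S2 \<Longrightarrow> y ^ s = (\<Sum>k<s. \<alpha> k * y ^ k)"
    using power_card_as_lower_powers[OF finite_S2] card_S2 by metis
  show thesis
  proof (rule that[of "\<lambda>k. (fst M, snd M - s + k)" \<alpha>])
    fix p assume p: "p \<in> S1 \<times> S2"
    have "mon M p = fst p ^ fst M * (snd p ^ (snd M - s) * snd p ^ s)"
      using le by (simp add: mon_def flip: power_add)
    also have "\<dots> = (\<Sum>k<s. \<alpha> k * mon (fst M, snd M - s + k) p)"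
      using p by (simp add: \<alpha>[of "snd p"] mem_Times_iff mon_def power_add
          sum_distrib_left sum_distrib_right mult_ac)
    finally show "mon M p = (\<Sum>k<s. \<alpha> k * mon (fst M, snd M - s + k) p)" .
  qed (use le in auto)
qed

definition normal_form :: "nat \<times> nat \<Rightarrow> (nat \<times> nat \<Rightarrow> 'a) \<Rightarrow> bool" where
  "normal_form M r \<longleftrightarrow> (\<forall>p\<in>S1 \<times> S2. (\<Sum>N\<in>Delta s. r N * mon N p) = mon M p)
     \<and> (\<forall>N. r N \<noteq> 0 \<longrightarrow> N \<in> Delta s \<and> (N = M \<or> fst N + snd N < fst M + snd M))
     \<and> (M \<in> Delta s \<longrightarrow> r M = 1)"

lemma normal_form_eval:
  "normal_form M r \<Longrightarrow> p \<in> S1 \<times> S2 \<Longrightarrow> (\<Sum>N\<in>Delta s. r N * mon N p) = mon M p"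
  unfolding normal_form_def by blast

lemma normal_form_support:
  "normal_form M r \<Longrightarrow> r N \<noteq> 0 \<Longrightarrow> N \<in> Delta s \<and> (N = M \<or> fst N + snd N < fst M + snd M)"
  unfolding normal_form_def by blast

lemma normal_form_coeff_above:
  assumes "normal_form M r" "N \<in> Delta s" "deg_rank M \<le> deg_rank N"
  shows "r N = (if N = M then 1 else 0)"
proof (cases "N = M")
  case True
  then show ?thesis using assms unfolding normal_form_def by simp
next
  case False
  then show ?thesis
    using normal_form_support[OF assms(1), of N] deg_rank_le_imp_total_deg_le[OF assms(3)] by auto
qed

lemma exists_normal_form: "\<exists>r. normal_form M r"
proof (induction "fst M + snd M" arbitrary: M rule: less_induct)
  case less
  show ?case
  proof (cases "M \<in> Delta s")
    case True
    have "(\<Sum>N\<in>Delta s. (if N = M then 1 else 0) * mon N p) = mon M p" for p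
      using True by (simp add: if_distrib[of "\<lambda>c. c * _"] cong: if_cong)
    then show ?thesis
      by (intro exI[of _ "\<lambda>N. if N = M then 1 else 0"]) (auto simp: normal_form_def True)
  next
    case False
    obtain Mk \<alpha> where deg: "\<And>k. k < s \<Longrightarrow> fst (Mk k) + snd (Mk k) < fst M + snd M"
      and eq: "\<And>p. p \<in> S1 \<times> S2 \<Longrightarrow> mon M p = (\<Sum>k<s. \<alpha> k * mon (Mk k) p)"
      by (rule mon_reduction_step[OF False]) (rule that)
    have "\<forall>k\<in>{..<s}. \<exists>r. normal_form (Mk k) r" using less deg by blast
    from bchoice[OF this] obtain R where "\<forall>k\<in>{..<s}. normal_form (Mk k) (R k)" ..
    then have R: "normal_form (Mk k) (R k)" if "k < s" for k using that by blast
    define r where "r N = (\<Sum>k<s. \<alpha> k * R k N)" for N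
    have "(\<Sum>N\<in>Delta s. r N * mon N p) = mon M p" if "p \<in> S1 \<times> S2" for p
    proof -
      have "(\<Sum>N\<in>Delta s. r N * mon N p) = (\<Sum>k<s. \<alpha> k * (\<Sum>N\<in>Delta s. R k N * mon N p))"
        unfolding r_def sum_distrib_left sum_distrib_right by (subst sum.swap) (simp add: mult_ac)
      also have "\<dots> = mon M p"
        using that by (simp add: eq normal_form_eval[OF R])
      finally show ?thesis .
    qed
    moreover have "N \<in> Delta s \<and> fst N + snd N < fst M + snd M" if nz: "r N \<noteq> 0" for N
    proof -
      obtain k where "k \<in> {..<s}" "\<alpha> k * R k N \<noteq> 0"
        using nz unfolding r_def by (rule sum.not_neutral_contains_not_neutral)
      then show ?thesis using normal_form_support[OF R, of k N] deg[of k] by auto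
    qed
    ultimately have "normal_form M r" using False unfolding normal_form_def by blast
    then show ?thesis by blast
  qed
qed

lemma reduce_combination:
  assumes "finite I" "m \<in> Delta s"
    and below: "\<And>i. i \<in> I \<Longrightarrow> \<kappa> i \<noteq> 0 \<Longrightarrow> deg_rank (\<mu> i) \<le> deg_rank m"
    and lead: "(\<Sum>i\<in>{i\<in>I. \<mu> i = m}. \<kappa> i) \<noteq> 0"
  obtains R
  where "\<And>p. p \<in> S1 \<times> S2 \<Longrightarrow> (\<Sum>N\<in>Delta s. R N * mon N p) = (\<Sum>i\<in>I. \<kappa> i * mon (\<mu> i) p)"
    and "R m \<noteq> 0" and "\<And>N. N \<in> Delta s \<Longrightarrow> deg_rank m < deg_rank N \<Longrightarrow> R N = 0"
proof -
  obtain nf where nf: "\<And>M. normal_form M (nf M)"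
    using exists_normal_form by metis
  define R where "R N = (\<Sum>i\<in>I. \<kappa> i * nf (\<mu> i) N)" for N
  have eval: "(\<Sum>N\<in>Delta s. R N * mon N p) = (\<Sum>i\<in>I. \<kappa> i * mon (\<mu> i) p)"
    if "p \<in> S1 \<times> S2" for p
  proof -
    have "(\<Sum>N\<in>Delta s. R N * mon N p) = (\<Sum>i\<in>I. \<kappa> i * (\<Sum>N\<in>Delta s. nf (\<mu> i) N * mon N p))"
      unfolding R_def sum_distrib_left sum_distrib_right by (subst sum.swap) (simp add: mult_ac)
    then show ?thesis using that by (simp add: normal_form_eval[OF nf])
  qed
  have coeff: "R N = (\<Sum>i\<in>{i\<in>I. \<mu> i = N}. \<kappa> i)"
    if "N \<in> Delta s" "deg_rank m \<le> deg_rank N" for N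
  proof -
    have "\<kappa> i * nf (\<mu> i) N = (if \<mu> i = N then \<kappa> i else 0)" if "i \<in> I" for i
      using below[OF that] normal_form_coeff_above[OF nf \<open>N \<in> Delta s\<close>, of "\<mu> i"]
        \<open>deg_rank m \<le> deg_rank N\<close> by (cases "\<kappa> i = 0") auto
    then show ?thesis
      unfolding R_def using assms(1) by (simp add: sum.inter_filter[symmetric] cong: sum.cong)
  qed
  have above: "R N = 0" if "N \<in> Delta s" "deg_rank m < deg_rank N" for N
    using coeff[OF that(1)] that(2) below by (force intro!: sum.neutral)
  show thesis
    by (rule that[OF eval]) (use coeff[OF assms(2) order.refl] lead above in auto)
qed

section \<open>Footprint bounds\<close>

lemma card_nonzero_ge_footprint:
  assumes supp: "\<And>N. P N \<noteq> 0 \<Longrightarrow> N \<in> Delta s" and lead: "P m \<noteq> 0"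
    and top: "\<And>N. P N \<noteq> 0 \<Longrightarrow> deg_rank N \<le> deg_rank m"
  shows "(s - fst m) * (s - snd m) \<le> card {p \<in> S1 \<times> S2. (\<Sum>N\<in>Delta s. P N * mon N p) \<noteq> 0}"
proof (rule ccontr)
  define c where "c p = (\<Sum>N\<in>Delta s. P N * mon N p)" for p
  define X where "X = {p \<in> S1 \<times> S2. c p \<noteq> 0}"
  define E where "E = {..<s - fst m} \<times> {..<s - snd m}"
  assume "\<not> ?thesis"
  then have card_less: "card X < card E" by (simp add: X_def E_def c_def card_cartesian_product)
  have fin: "finite X" "finite E" using finite_grid by (simp_all add: X_def E_def)
  obtain w e0 where e0: "e0 \<in> E" "w e0 \<noteq> 0"
    and max: "\<And>e. e \<in> E \<Longrightarrow> w e \<noteq> 0 \<Longrightarrow> deg_rank e \<le> deg_rank e0"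
    and vanish: "\<And>p. p \<in> X \<Longrightarrow> (\<Sum>e\<in>E. w e * mon e p) = 0"
    by (rule exists_vanishing_combination[OF fin card_less]) (rule that)
  \<comment> \<open>The product of the two polynomials vanishes on the grid, yet its leading monomial
    e0 + m lies in Delta s.\<close>
  define I where "I = E \<times> Delta s"
  define \<kappa> where "\<kappa> i = w (fst i) * P (snd i)" for i
  define \<mu> where "\<mu> i = fst i + snd i" for i :: "(nat \<times> nat) \<times> nat \<times> nat"
  have mD: "m \<in> Delta s" using supp lead by blast
  have m'D: "e0 + m \<in> Delta s" using e0 mD by (auto simp: E_def Delta_def)
  have below: "deg_rank (\<mu> i) \<le> deg_rank (e0 + m)" if "i \<in> I" "\<kappa> i \<noteq> 0" for i
    using that max top by (auto simp: \<kappa>_def \<mu>_def I_def intro!: deg_rank_add_mono)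
  have "finite I" by (simp add: I_def E_def)
  have "(\<Sum>i\<in>{i \<in> I. \<mu> i = e0 + m}. \<kappa> i) = w e0 * P m"
    unfolding I_def \<kappa>_def \<mu>_def using e0 mD max top
    by (intro leading_coeff_of_product) (auto simp: E_def)
  then have lead': "(\<Sum>i\<in>{i \<in> I. \<mu> i = e0 + m}. \<kappa> i) \<noteq> 0"
    using e0 lead by simp
  obtain R where eval: "\<And>p. p \<in> S1 \<times> S2 \<Longrightarrow> (\<Sum>N\<in>Delta s. R N * mon N p) = (\<Sum>i\<in>I. \<kappa> i * mon (\<mu> i) p)"
    and "R (e0 + m) \<noteq> 0"
    by (rule reduce_combination[OF \<open>finite I\<close> m'D below lead']) (assumption | rule that)+
  moreover have "(\<Sum>N\<in>Delta s. R N * mon N p) = 0" if p: "p \<in> S1 \<times> S2" for p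
  proof -
    have "(\<Sum>i\<in>I. \<kappa> i * mon (\<mu> i) p) = (\<Sum>e\<in>E. w e * mon e p) * c p"
      unfolding I_def sum.cartesian_product \<kappa>_def \<mu>_def c_def sum_product
      by (rule sum.cong) (auto simp: mon_add mult_ac)
    then show ?thesis using eval[OF p] vanish p by (cases "c p = 0") (auto simp: X_def)
  qed
  ultimately show False using coeff_zero_if_eval_vanishes m'D by blast
qed

definition moment :: "('a \<times> 'a \<Rightarrow> 'a) \<Rightarrow> nat \<times> nat \<Rightarrow> 'a" where
  "moment v N = (\<Sum>p\<in>S1 \<times> S2. v p * mon N p)"

lemma card_support_ge_dual_footprint:
  assumes mD: "m \<in> Delta s"
    and low: "\<And>N. N \<in> Delta s \<Longrightarrow> deg_rank N < deg_rank m \<Longrightarrow> moment v N = 0"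
    and vm: "moment v m \<noteq> 0"
  shows "(fst m + 1) * (snd m + 1) \<le> card {p \<in> S1 \<times> S2. v p \<noteq> 0}"
proof (rule ccontr)
  define T where "T = {p \<in> S1 \<times> S2. v p \<noteq> 0}"
  define E where "E = {..fst m} \<times> {..snd m}"
  assume "\<not> ?thesis"
  then have card_less: "card T < card E" by (simp add: T_def E_def card_cartesian_product)
  have fin: "finite T" "finite E" using finite_grid by (simp_all add: T_def E_def)
  obtain w e0 where e0: "e0 \<in> E" "w e0 \<noteq> 0"
    and max: "\<And>e. e \<in> E \<Longrightarrow> w e \<noteq> 0 \<Longrightarrow> deg_rank e \<le> deg_rank e0"
    and vanish: "\<And>p. p \<in> T \<Longrightarrow> (\<Sum>e\<in>E. w e * mon e p) = 0"
    by (rule exists_vanishing_combination[OF fin card_less]) (rule that)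
  \<comment> \<open>Shifting this combination by m - e0 gives a polynomial with leading monomial m that vanishes
    on the support of v, so v is orthogonal to its normal form.\<close>
  define d where "d = m - e0"
  have e0d: "e0 + d = m" using e0 by (auto simp: d_def E_def prod_eq_iff)
  have below: "deg_rank (e + d) \<le> deg_rank m" if "e \<in> E" "w e \<noteq> 0" for e
    using deg_rank_add_mono[OF max[OF that] order.refl, of d] e0d by simp
  have "{e \<in> E. e + d = m} = {e0}" using e0 e0d by auto
  then have lead: "(\<Sum>e\<in>{e \<in> E. e + d = m}. w e) \<noteq> 0" using e0 by simp
  obtain R where eval: "\<And>p. p \<in> S1 \<times> S2 \<Longrightarrow> (\<Sum>N\<in>Delta s. R N * mon N p) = (\<Sum>e\<in>E. w e * mon (e + d) p)"
    and Rm: "R m \<noteq> 0" and above: "\<And>N. N \<in> Delta s \<Longrightarrow> deg_rank m < deg_rank N \<Longrightarrow> R N = 0"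
    by (rule reduce_combination[OF fin(2) mD below lead]) (assumption | rule that)+
  have "v p * (\<Sum>N\<in>Delta s. R N * mon N p) = 0" if "p \<in> S1 \<times> S2" for p
  proof -
    have "(\<Sum>e\<in>E. w e * mon (e + d) p) = (\<Sum>e\<in>E. w e * mon e p) * mon d p"
      by (simp add: mon_add sum_distrib_left mult_ac)
    then show ?thesis using that eval[OF that] vanish[of p] by (cases "v p = 0") (auto simp: T_def)
  qed
  then have "0 = (\<Sum>p\<in>S1 \<times> S2. v p * (\<Sum>N\<in>Delta s. R N * mon N p))"
    by (simp add: sum.neutral)
  also have "\<dots> = (\<Sum>N\<in>Delta s. R N * moment v N)"
    unfolding moment_def sum_distrib_left sum_distrib_right by (subst sum.swap) (simp add: mult_ac)
  also have "\<dots> = (\<Sum>N\<in>{m}. R N * moment v N)"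
  proof (rule sum.mono_neutral_right)
    show "\<forall>N\<in>Delta s - {m}. R N * moment v N = 0"
    proof
      fix N assume N: "N \<in> Delta s - {m}"
      then have "deg_rank N < deg_rank m \<or> deg_rank m < deg_rank N"
        using deg_rank_inj by (metis DiffD2 insertI1 linorder_neqE_nat)
      then show "R N * moment v N = 0" using N low[of N] above[of N] by auto
    qed
  qed (use mD in auto)
  finally show False using Rm vm by simp
qed

section \<open>Evaluation codes and their duals\<close>

definition eval_vec :: "(nat \<times> nat \<Rightarrow> 'a) \<Rightarrow> 'a \<times> 'a \<Rightarrow> 'a" where
  "eval_vec P = (\<lambda>p. if p \<in> S1 \<times> S2 then \<Sum>N\<in>Delta s. P N * mon N p else 0)"

lemma evcode_iff:
  assumes "L \<subseteq> Delta s"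
  shows "c \<in> evcode S1 S2 L \<longleftrightarrow> (\<exists>P. (\<forall>N. P N \<noteq> 0 \<longrightarrow> N \<in> L) \<and> c = eval_vec P)"
proof -
  have sum_L: "(\<Sum>m\<in>L. f m * fst p ^ fst m * snd p ^ snd m)
      = (\<Sum>N\<in>Delta s. (if N \<in> L then f N else 0) * mon N p)" for f and p :: "'a \<times> 'a"
    using assms by (intro sum.mono_neutral_cong_left) (auto simp: mon_def mult.assoc)
  have "c \<in> evcode S1 S2 L \<longleftrightarrow> (\<exists>f. c = eval_vec (\<lambda>N. if N \<in> L then f N else 0))"
    unfolding evcode_def eval_vec_def sum_L by simp
  also have "\<dots> \<longleftrightarrow> (\<exists>P. (\<forall>N. P N \<noteq> 0 \<longrightarrow> N \<in> L) \<and> c = eval_vec P)"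
  proof
    assume "\<exists>f. c = eval_vec (\<lambda>N. if N \<in> L then f N else 0)"
    then obtain f where "c = eval_vec (\<lambda>N. if N \<in> L then f N else 0)" ..
    then show "\<exists>P. (\<forall>N. P N \<noteq> 0 \<longrightarrow> N \<in> L) \<and> c = eval_vec P"
      by (intro exI[of _ "\<lambda>N. if N \<in> L then f N else 0"]) simp
  next
    assume "\<exists>P. (\<forall>N. P N \<noteq> 0 \<longrightarrow> N \<in> L) \<and> c = eval_vec P"
    then obtain P where "\<forall>N. P N \<noteq> 0 \<longrightarrow> N \<in> L" "c = eval_vec P" by blast
    moreover have "(\<lambda>N. if N \<in> L then P N else 0) = P" using \<open>\<forall>N. P N \<noteq> 0 \<longrightarrow> N \<in> L\<close>
      by (intro ext) auto
    ultimately show "\<exists>f. c = eval_vec (\<lambda>N. if N \<in> L then f N else 0)"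
      by (intro exI[of _ P]) simp
  qed
  finally show ?thesis .
qed

lemma eval_vec_unit_in_evcode:
  assumes "N \<in> L" "L \<subseteq> Delta s"
  shows "eval_vec (\<lambda>M. if M = N then 1 else 0) \<in> evcode S1 S2 L"
  unfolding evcode_iff[OF assms(2)] using assms(1)
  by (intro exI[of _ "\<lambda>M. if M = N then 1 else 0"]) simp

lemma eval_vec_eq_imp_coeff_eq:
  assumes "eval_vec P = eval_vec P'" "N \<in> Delta s"
  shows "P N = P' N"
proof -
  have "(\<Sum>N\<in>Delta s. (P N - P' N) * mon N p) = 0" if "p \<in> S1 \<times> S2" for p
    using fun_cong[OF assms(1), of p] that
    by (simp add: eval_vec_def left_diff_distrib sum_subtractf)
  from coeff_zero_if_eval_vanishes[OF this assms(2)] show ?thesis by simp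
qed

lemma hweight_eval_vec:
  "hweight S1 S2 (eval_vec P) = card {p \<in> S1 \<times> S2. (\<Sum>N\<in>Delta s. P N * mon N p) \<noteq> 0}"
  unfolding hweight_def eval_vec_def by (rule arg_cong[where f = card]) auto

lemma inner_eval_vec:
  "(\<Sum>p\<in>S1 \<times> S2. v p * eval_vec P p) = (\<Sum>N\<in>Delta s. P N * moment v N)"
proof -
  have "(\<Sum>p\<in>S1 \<times> S2. v p * eval_vec P p) = (\<Sum>p\<in>S1 \<times> S2. \<Sum>N\<in>Delta s. P N * (v p * mon N p))"
    by (intro sum.cong) (auto simp: eval_vec_def sum_distrib_left mult_ac)
  also have "\<dots> = (\<Sum>N\<in>Delta s. P N * moment v N)"
    unfolding moment_def sum_distrib_left by (rule sum.swap)
  finally show ?thesis .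
qed

lemma inner_eval_vec_unit:
  "N \<in> Delta s \<Longrightarrow> (\<Sum>p\<in>S1 \<times> S2. v p * eval_vec (\<lambda>M. if M = N then 1 else 0) p) = moment v N"
  by (simp add: inner_eval_vec if_distrib[of "\<lambda>c. c * _"] cong: if_cong)

lemma dual_evcode_iff:
  assumes "L \<subseteq> Delta s"
  shows "v \<in> dual S1 S2 (evcode S1 S2 L) \<longleftrightarrow> v \<in> ambient S1 S2 \<and> (\<forall>N\<in>L. moment v N = 0)"
proof -
  have "(\<forall>c\<in>evcode S1 S2 L. (\<Sum>p\<in>S1 \<times> S2. v p * c p) = 0) \<longleftrightarrow> (\<forall>N\<in>L. moment v N = 0)"
  proof
    assume orth: "\<forall>c\<in>evcode S1 S2 L. (\<Sum>p\<in>S1 \<times> S2. v p * c p) = 0"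
    show "\<forall>N\<in>L. moment v N = 0"
    proof
      fix N assume "N \<in> L"
      then have "eval_vec (\<lambda>M. if M = N then 1 else 0) \<in> evcode S1 S2 L"
        using assms by (rule eval_vec_unit_in_evcode)
      then show "moment v N = 0"
        using orth inner_eval_vec_unit[of N v] \<open>N \<in> L\<close> assms by auto
    qed
  next
    assume mom: "\<forall>N\<in>L. moment v N = 0"
    show "\<forall>c\<in>evcode S1 S2 L. (\<Sum>p\<in>S1 \<times> S2. v p * c p) = 0"
    proof
      fix c assume "c \<in> evcode S1 S2 L"
      then obtain P where P: "\<forall>N. P N \<noteq> 0 \<longrightarrow> N \<in> L" "c = eval_vec P"
        using evcode_iff[OF assms] by blast
      have "P N * moment v N = 0" for N using P(1) mom by (cases "P N = 0") auto
      then show "(\<Sum>p\<in>S1 \<times> S2. v p * c p) = 0" by (simp add: P(2) inner_eval_vec sum.neutral)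
    qed
  qed
  then show ?thesis by (simp add: dual_def)
qed

lemma evcode_empty: "evcode S1 S2 {} = {\<lambda>_. 0}"
  by (auto simp: evcode_def fun_eq_iff)

lemma finite_hweight_image: "finite (hweight S1 S2 ` C)"
proof (rule finite_subset)
  show "hweight S1 S2 ` C \<subseteq> {..card (S1 \<times> S2)}"
    using finite_grid by (auto simp: hweight_def intro!: card_mono)
qed simp

lemma hweight_ge_footprint:
  assumes L: "L \<subseteq> Delta s" and c: "c \<in> evcode S1 S2 L"
    and not_below: "c \<notin> evcode S1 S2 {N \<in> Delta s. deg_rank N < k}"
  obtains m where "m \<in> L" "k \<le> deg_rank m" "(s - fst m) * (s - snd m) \<le> hweight S1 S2 c"
proof -
  obtain P where P: "\<forall>N. P N \<noteq> 0 \<longrightarrow> N \<in> L" "c = eval_vec P"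
    using c evcode_iff[OF L] by blast
  have "\<exists>N0. P N0 \<noteq> 0 \<and> k \<le> deg_rank N0"
  proof (rule ccontr)
    assume "\<nexists>N0. P N0 \<noteq> 0 \<and> k \<le> deg_rank N0"
    then have "\<forall>N. P N \<noteq> 0 \<longrightarrow> N \<in> {N \<in> Delta s. deg_rank N < k}"
      using P(1) L by (auto simp: not_le)
    then show False using not_below P(2) evcode_iff[of "{N \<in> Delta s. deg_rank N < k}"] by auto
  qed
  then obtain N0 where N0: "P N0 \<noteq> 0" "k \<le> deg_rank N0" by blast
  have "finite {N. P N \<noteq> 0}" using P(1) L by (auto intro: finite_subset[OF _ finite_Delta])
  then obtain m where m: "P m \<noteq> 0" and top: "\<And>N. P N \<noteq> 0 \<Longrightarrow> deg_rank N \<le> deg_rank m"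
    using exists_deg_rank_max[of "{N. P N \<noteq> 0}"] N0(1) by auto
  have "(s - fst m) * (s - snd m) \<le> hweight S1 S2 c"
    unfolding P(2) hweight_eval_vec using P(1) L m top by (intro card_nonzero_ge_footprint) auto
  then show thesis using that[of m] P(1) m top[OF N0(1)] N0(2) by auto
qed

lemma exists_box_codeword:
  assumes "(a, b) \<in> Delta s"
  obtains P where "\<And>N. P N \<noteq> 0 \<Longrightarrow> fst N \<le> a \<and> snd N \<le> b" "P (a, b) = 1"
    and "hweight S1 S2 (eval_vec P) = (s - a) * (s - b)"
proof -
  have ab: "a < s" "b < s" using assms by (auto simp: Delta_def)
  obtain A B where A: "A \<subseteq> S1" "card A = a" and B: "B \<subseteq> S2" "card B = b"
    using obtain_subset_with_card_n[of a S1] obtain_subset_with_card_n[of b S2]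
      ab card_S1 card_S2 by (metis less_imp_le)
  have fin: "finite A" "finite B"
    using A B finite_S1 finite_S2 finite_subset by auto
  obtain \<gamma> where \<gamma>: "\<gamma> a = 1" "\<And>x. (\<Prod>u\<in>A. x - u) = (\<Sum>t\<le>a. \<gamma> t * x ^ t)"
    using prod_linear_factors_expand[OF fin(1)] A(2) by metis
  obtain \<delta> where \<delta>: "\<delta> b = 1" "\<And>y. (\<Prod>u\<in>B. y - u) = (\<Sum>t\<le>b. \<delta> t * y ^ t)"
    using prod_linear_factors_expand[OF fin(2)] B(2) by metis
  define P where "P N = (if fst N \<le> a \<and> snd N \<le> b then \<gamma> (fst N) * \<delta> (snd N) else 0)" for N
  have box: "{..a} \<times> {..b} \<subseteq> Delta s" using ab by (auto simp: Delta_def)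
  have "(\<Sum>N\<in>Delta s. P N * mon N p) = (\<Prod>u\<in>A. fst p - u) * (\<Prod>u\<in>B. snd p - u)" for p
  proof -
    have "(\<Sum>N\<in>Delta s. P N * mon N p) = (\<Sum>N\<in>{..a} \<times> {..b}. P N * mon N p)"
      using box by (intro sum.mono_neutral_right) (auto simp: P_def)
    also have "\<dots> = (\<Sum>t\<le>a. \<gamma> t * fst p ^ t) * (\<Sum>r\<le>b. \<delta> r * snd p ^ r)"
      unfolding sum_product sum.cartesian_product
      by (rule sum.cong) (auto simp: P_def mon_def mult_ac)
    finally show ?thesis by (simp add: \<gamma> \<delta>)
  qed
  then have "{p \<in> S1 \<times> S2. (\<Sum>N\<in>Delta s. P N * mon N p) \<noteq> 0} = (S1 - A) \<times> (S2 - B)"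
    using fin by (auto simp: prod_zero_iff)
  then have hw: "hweight S1 S2 (eval_vec P) = (s - a) * (s - b)"
    using A B fin card_S1 card_S2 by (simp add: hweight_eval_vec card_cartesian_product card_Diff_subset)
  have supp: "fst N \<le> a \<and> snd N \<le> b" if "P N \<noteq> 0" for N
    using that by (simp add: P_def split: if_splits)
  have "P (a, b) = 1" using \<gamma>(1) \<delta>(1) by (simp add: P_def)
  from supp this hw show thesis by (rule that)
qed

lemma exists_moment_witness:
  assumes "(a, b) \<in> Delta s"
  obtains v where "v \<in> ambient S1 S2" "moment v (a, b) \<noteq> 0"
    and "\<And>N. fst N < a \<or> snd N < b \<Longrightarrow> moment v N = 0"
proof -
  obtain \<alpha> where \<alpha>: "\<And>i. i < a \<Longrightarrow> (\<Sum>x\<in>S1. \<alpha> x * x ^ i) = 0" "(\<Sum>x\<in>S1. \<alpha> x * x ^ a) \<noteq> 0"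
    using exists_weights_vanishing_below[OF finite_S1, of a] assms card_S1 by (auto simp: Delta_def)
  obtain \<beta> where \<beta>: "\<And>j. j < b \<Longrightarrow> (\<Sum>y\<in>S2. \<beta> y * y ^ j) = 0" "(\<Sum>y\<in>S2. \<beta> y * y ^ b) \<noteq> 0"
    using exists_weights_vanishing_below[OF finite_S2, of b] assms card_S2 by (auto simp: Delta_def)
  define v where "v p = (if p \<in> S1 \<times> S2 then \<alpha> (fst p) * \<beta> (snd p) else 0)" for p
  have "moment v N = (\<Sum>x\<in>S1. \<alpha> x * x ^ fst N) * (\<Sum>y\<in>S2. \<beta> y * y ^ snd N)" for N
    unfolding moment_def sum_product sum.cartesian_product
    by (rule sum.cong) (auto simp: v_def mon_def mult_ac)
  then show thesis using that[of v] \<alpha> \<beta> by (auto simp: ambient_def v_def)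
qed

lemma exists_codeword_at:
  assumes "m \<in> Delta s" "deg_rank m \<le> K"
  shows "\<exists>c\<in>evcode S1 S2 {N \<in> Delta s. deg_rank N \<le> K}.
    hweight S1 S2 c = (s - fst m) * (s - snd m)
    \<and> (\<forall>L. L \<subseteq> Delta s \<longrightarrow> m \<notin> L \<longrightarrow> c \<notin> evcode S1 S2 L)"
proof -
  obtain P where supp: "\<And>N. P N \<noteq> 0 \<Longrightarrow> fst N \<le> fst m \<and> snd N \<le> snd m"
    and Pm: "P m = 1" and hw: "hweight S1 S2 (eval_vec P) = (s - fst m) * (s - snd m)"
    using exists_box_codeword[of "fst m" "snd m"] assms(1) by auto
  have "N \<in> {N \<in> Delta s. deg_rank N \<le> K}" if "P N \<noteq> 0" for N
    using supp[OF that] deg_rank_mono[of N m] assms by (auto simp: Delta_eq mem_Times_iff)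
  then have "eval_vec P \<in> evcode S1 S2 {N \<in> Delta s. deg_rank N \<le> K}"
    by (subst evcode_iff) blast+
  moreover have "eval_vec P \<notin> evcode S1 S2 L" if L: "L \<subseteq> Delta s" "m \<notin> L" for L
  proof
    assume "eval_vec P \<in> evcode S1 S2 L"
    then obtain P' where "\<forall>N. P' N \<noteq> 0 \<longrightarrow> N \<in> L" "eval_vec P = eval_vec P'"
      using evcode_iff[OF L(1)] by blast
    then show False using eval_vec_eq_imp_coeff_eq[of P P' m] assms(1) Pm L(2) by auto
  qed
  ultimately show ?thesis using hw by blast
qed

section \<open>Codes of segments of the degree order\<close>

lemma M1_evcode_rank_segments:
  assumes T: "T \<in> Delta s" "k \<le> deg_rank T" "deg_rank T \<le> K"
  defines "L1 \<equiv> {N \<in> Delta s. deg_rank N \<le> K}" and "L2 \<equiv> {N \<in> Delta s. deg_rank N < k}"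
  shows "M1 S1 S2 (evcode S1 S2 L1) (evcode S1 S2 L2) = (MIN m\<in>L1 - L2. (s - fst m) * (s - snd m))"
proof -
  have L: "L1 \<subseteq> Delta s" "L2 \<subseteq> Delta s" by (auto simp: L1_def L2_def)
  have codeword: "\<exists>c\<in>evcode S1 S2 L1 - evcode S1 S2 L2. hweight S1 S2 c = (s - fst m) * (s - snd m)"
    if "m \<in> L1 - L2" for m
  proof -
    from that have m: "m \<in> Delta s" "deg_rank m \<le> K" "m \<notin> L2" by (auto simp: L1_def)
    then obtain c where c: "c \<in> evcode S1 S2 L1" "hweight S1 S2 c = (s - fst m) * (s - snd m)"
      and excl: "\<forall>L. L \<subseteq> Delta s \<longrightarrow> m \<notin> L \<longrightarrow> c \<notin> evcode S1 S2 L"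
      using exists_codeword_at[of m K] unfolding L1_def by blast
    with L(2) m(3) show ?thesis by blast
  qed
  have bound: "\<exists>m\<in>L1 - L2. (s - fst m) * (s - snd m) \<le> hweight S1 S2 c"
    if c: "c \<in> evcode S1 S2 L1 - evcode S1 S2 L2" for c
  proof -
    have "c \<in> evcode S1 S2 L1" "c \<notin> evcode S1 S2 {N \<in> Delta s. deg_rank N < k}"
      using c by (simp_all add: L2_def)
    then obtain m where "m \<in> L1" "k \<le> deg_rank m" "(s - fst m) * (s - snd m) \<le> hweight S1 S2 c"
      by (rule hweight_ge_footprint[OF L(1)])
    then show ?thesis by (auto simp: L2_def)
  qed
  have T_in: "T \<in> L1 - L2" using T by (simp add: L1_def L2_def)
  show ?thesis
    unfolding M1_def
  proof (rule Min_eq_if_mutual_bounds)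
    show "finite (hweight S1 S2 ` (evcode S1 S2 L1 - evcode S1 S2 L2))"
      by (rule finite_hweight_image)
    show "finite ((\<lambda>m. (s - fst m) * (s - snd m)) ` (L1 - L2))"
      using finite_subset[OF L(1) finite_Delta] by simp
    show "hweight S1 S2 ` (evcode S1 S2 L1 - evcode S1 S2 L2) \<noteq> {}"
      using codeword[OF T_in] by blast
    show "(\<lambda>m. (s - fst m) * (s - snd m)) ` (L1 - L2) \<noteq> {}"
      using T_in by blast
  next
    fix a assume "a \<in> hweight S1 S2 ` (evcode S1 S2 L1 - evcode S1 S2 L2)"
    then obtain c where "c \<in> evcode S1 S2 L1 - evcode S1 S2 L2" "a = hweight S1 S2 c" by blast
    with bound show "\<exists>b\<in>(\<lambda>m. (s - fst m) * (s - snd m)) ` (L1 - L2). b \<le> a" by blast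
  next
    fix b assume "b \<in> (\<lambda>m. (s - fst m) * (s - snd m)) ` (L1 - L2)"
    then obtain m where "m \<in> L1 - L2" "b = (s - fst m) * (s - snd m)" by blast
    with codeword obtain c where "c \<in> evcode S1 S2 L1 - evcode S1 S2 L2" "hweight S1 S2 c = b"
      by blast
    then show "\<exists>a\<in>hweight S1 S2 ` (evcode S1 S2 L1 - evcode S1 S2 L2). a \<le> b" by blast
  qed
qed

lemma min_dist_evcode_rank_segment:
  assumes "T \<in> Delta s" "deg_rank T \<le> K"
  defines "L \<equiv> {N \<in> Delta s. deg_rank N \<le> K}"
  shows "min_dist S1 S2 (evcode S1 S2 L) = (MIN m\<in>L. (s - fst m) * (s - snd m))"
proof -
  have "min_dist S1 S2 (evcode S1 S2 L) = M1 S1 S2 (evcode S1 S2 L) (evcode S1 S2 {N \<in> Delta s. deg_rank N < 0})"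
    by (simp add: min_dist_def M1_def evcode_empty)
  also have "\<dots> = (MIN m\<in>L - {N \<in> Delta s. deg_rank N < 0}. (s - fst m) * (s - snd m))"
    unfolding L_def using assms(1,2) by (intro M1_evcode_rank_segments) auto
  finally show ?thesis by simp
qed

lemma hweight_ge_dual_footprint:
  assumes L2: "L2 \<subseteq> Delta s"
    and v: "v \<in> dual S1 S2 (evcode S1 S2 L2) - dual S1 S2 (evcode S1 S2 {N \<in> Delta s. deg_rank N \<le> K})"
  obtains m where "m \<in> {N \<in> Delta s. deg_rank N \<le> K} - L2" "(fst m + 1) * (snd m + 1) \<le> hweight S1 S2 v"
proof -
  define L1 where "L1 = {N \<in> Delta s. deg_rank N \<le> K}"
  have L1: "L1 \<subseteq> Delta s" by (auto simp: L1_def)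
  have below: "\<forall>N\<in>L2. moment v N = 0" and "\<exists>N\<in>L1. moment v N \<noteq> 0"
    using v dual_evcode_iff[OF L1] dual_evcode_iff[OF L2] by (auto simp: L1_def)
  moreover have "finite {N \<in> L1. moment v N \<noteq> 0}" using L1 by (auto intro: finite_subset)
  ultimately have "finite {N \<in> L1. moment v N \<noteq> 0}" "{N \<in> L1. moment v N \<noteq> 0} \<noteq> {}" by auto
  then obtain m where m: "m \<in> {N \<in> L1. moment v N \<noteq> 0}"
    and min: "\<And>N. N \<in> {N \<in> L1. moment v N \<noteq> 0} \<Longrightarrow> deg_rank m \<le> deg_rank N"
    by (rule exists_deg_rank_min) (rule that)
  have "moment v N = 0" if N: "N \<in> Delta s" "deg_rank N < deg_rank m" for N
  proof (rule ccontr)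
    assume "moment v N \<noteq> 0"
    moreover have "N \<in> L1" using N m by (auto simp: L1_def)
    ultimately have "deg_rank m \<le> deg_rank N" using min by blast
    with N(2) show False by simp
  qed
  then have "(fst m + 1) * (snd m + 1) \<le> hweight S1 S2 v"
    using card_support_ge_dual_footprint[of m v] m L1 by (auto simp: hweight_def)
  moreover have "m \<in> L1 - L2" using below m by blast
  ultimately show thesis using that by (simp add: L1_def)
qed

lemma dual_evcode_rank_segments_differ:
  assumes T: "T \<in> Delta s" "deg_rank T \<le> K"
  defines "L1 \<equiv> {N \<in> Delta s. deg_rank N \<le> K}" and "L2 \<equiv> {N \<in> Delta s. deg_rank N < deg_rank T}"
  shows "dual S1 S2 (evcode S1 S2 L2) - dual S1 S2 (evcode S1 S2 L1) \<noteq> {}"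
proof -
  have L: "L1 \<subseteq> Delta s" "L2 \<subseteq> Delta s" by (auto simp: L1_def L2_def)
  obtain v where v: "v \<in> ambient S1 S2" "moment v T \<noteq> 0"
    and vanish: "\<And>N. fst N < fst T \<or> snd N < snd T \<Longrightarrow> moment v N = 0"
    using exists_moment_witness[of "fst T" "snd T"] T(1) by auto
  have "v \<in> dual S1 S2 (evcode S1 S2 L2)"
    unfolding dual_evcode_iff[OF L(2)]
  proof (intro conjI v(1) ballI)
    fix N assume "N \<in> L2"
    then have "deg_rank N < deg_rank T" by (simp add: L2_def)
    then show "moment v N = 0" by (intro vanish deg_rank_less_imp_less)
  qed
  moreover have "v \<notin> dual S1 S2 (evcode S1 S2 L1)"
  proof
    assume "v \<in> dual S1 S2 (evcode S1 S2 L1)"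
    moreover have "T \<in> L1" using T by (simp add: L1_def)
    ultimately show False using v(2) dual_evcode_iff[OF L(1)] by blast
  qed
  ultimately show ?thesis by blast
qed

lemma M1_dual_evcode_rank_segments_ge:
  assumes T: "T \<in> Delta s" "deg_rank T \<le> K"
  defines "L1 \<equiv> {N \<in> Delta s. deg_rank N \<le> K}" and "L2 \<equiv> {N \<in> Delta s. deg_rank N < deg_rank T}"
  shows "(MIN m\<in>L1 - L2. (fst m + 1) * (snd m + 1))
    \<le> M1 S1 S2 (dual S1 S2 (evcode S1 S2 L2)) (dual S1 S2 (evcode S1 S2 L1))"
proof -
  have "L2 \<subseteq> Delta s" by (auto simp: L2_def)
  have "(MIN m\<in>L1 - L2. (fst m + 1) * (snd m + 1)) \<le> hweight S1 S2 v"
    if v: "v \<in> dual S1 S2 (evcode S1 S2 L2) - dual S1 S2 (evcode S1 S2 L1)" for v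
  proof -
    obtain m where "m \<in> L1 - L2" "(fst m + 1) * (snd m + 1) \<le> hweight S1 S2 v"
      using hweight_ge_dual_footprint[OF \<open>L2 \<subseteq> Delta s\<close> v[unfolded L1_def]]
      unfolding L1_def by blast
    moreover have "finite (L1 - L2)" by (auto simp: L1_def intro: finite_subset)
    ultimately show ?thesis by (meson Min_le finite_imageI image_eqI order_trans)
  qed
  then show ?thesis
    unfolding M1_def using finite_hweight_image dual_evcode_rank_segments_differ[OF T]
    by (subst Min_ge_iff) (auto simp: L1_def L2_def)
qed

lemma antidiagonal_segment:
  assumes "a \<le> b" "b < s"
  defines "L1 \<equiv> {N \<in> Delta s. deg_le N (a, b)}" and "L2 \<equiv> {N \<in> Delta s. deg_less N (b, a)}"
  shows "L2 \<subset> L1" and "L1 \<subseteq> Delta s" and "card L1 - card L2 = b - a + 1"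
    and "M1 S1 S2 (evcode S1 S2 L1) (evcode S1 S2 L2) = (s - a) * (s - b)"
    and "(a + 1) * (b + 1) \<le> M1 S1 S2 (dual S1 S2 (evcode S1 S2 L2)) (dual S1 S2 (evcode S1 S2 L1))"
    and "min_dist S1 S2 (evcode S1 S2 L1) = (MIN m\<in>L1. (s - fst m) * (s - snd m))"
proof -
  have L1: "L1 = {N \<in> Delta s. deg_rank N \<le> deg_rank (a, b)}" by (simp add: L1_def deg_rank_le_iff)
  have L2: "L2 = {N \<in> Delta s. deg_rank N < deg_rank (b, a)}" by (simp add: L2_def deg_rank_less_iff)
  have in_Delta: "(a, b) \<in> Delta s" "(b, a) \<in> Delta s" using assms by (auto simp: Delta_def)
  have between: "deg_rank (b, a) \<le> deg_rank N \<and> deg_rank N \<le> deg_rank (a, b)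
      \<longleftrightarrow> fst N + snd N = a + b \<and> a \<le> snd N \<and> snd N \<le> b" for N
    using deg_rank_between_iff[of "(b, a)" "a + b" "(a, b)" N] by simp
  have ba_le_ab: "deg_rank (b, a) \<le> deg_rank (a, b)" using between[of "(b, a)"] assms(1) by simp
  have "L1 - L2 = {N \<in> Delta s. deg_rank (b, a) \<le> deg_rank N \<and> deg_rank N \<le> deg_rank (a, b)}"
    by (auto simp: L1 L2)
  also have "\<dots> = (\<lambda>t. (a + b - t, t)) ` {a..b}"
    unfolding between using assms by (auto simp: Delta_def image_iff prod_eq_iff)
  finally have diff: "L1 - L2 = (\<lambda>t. (a + b - t, t)) ` {a..b}" .
  show "L1 \<subseteq> Delta s" by (simp add: L1)
  have "L2 \<subseteq> L1" using ba_le_ab by (auto simp: L1 L2)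
  moreover have "(b, a) \<in> L1 - L2" using ba_le_ab in_Delta by (simp add: L1 L2)
  ultimately show "L2 \<subset> L1" by blast
  have "card L1 - card L2 = card (L1 - L2)"
    using \<open>L2 \<subseteq> L1\<close> by (simp add: card_Diff_subset L2 finite_subset[of _ "Delta s"])
  also have "\<dots> = b - a + 1" unfolding diff using assms(1) by (subst card_image) (auto simp: inj_on_def)
  finally show "card L1 - card L2 = b - a + 1" .
  have "M1 S1 S2 (evcode S1 S2 L1) (evcode S1 S2 L2) = (MIN m\<in>L1 - L2. (s - fst m) * (s - snd m))"
    unfolding L1 L2 using in_Delta ba_le_ab by (intro M1_evcode_rank_segments) auto
  also have "\<dots> = (s - (a + b - a)) * (s - a)"
    unfolding diff image_image fst_conv snd_conv
  proof (rule Min_image_eqI[where a = a])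
    fix t assume "t \<in> {a..b}"
    then show "(s - (a + b - a)) * (s - a) \<le> (s - (a + b - t)) * (s - t)"
      using assms by (auto intro: mult_le_mult_of_same_sum)
  qed (use assms in auto)
  finally show "M1 S1 S2 (evcode S1 S2 L1) (evcode S1 S2 L2) = (s - a) * (s - b)" by simp
  have "(MIN m\<in>L1 - L2. (fst m + 1) * (snd m + 1)) = (a + b - a + 1) * (a + 1)"
    unfolding diff image_image fst_conv snd_conv
  proof (rule Min_image_eqI[where a = a])
    fix t assume "t \<in> {a..b}"
    then show "(a + b - a + 1) * (a + 1) \<le> (a + b - t + 1) * (t + 1)"
      using assms by (subst mult.commute) (auto intro: mult_le_mult_of_same_sum)
  qed (use assms in auto)
  with M1_dual_evcode_rank_segments_ge[OF in_Delta(2) ba_le_ab] assms(1) show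
    "(a + 1) * (b + 1) \<le> M1 S1 S2 (dual S1 S2 (evcode S1 S2 L2)) (dual S1 S2 (evcode S1 S2 L1))"
    by (simp add: L1 L2 mult.commute)
  show "min_dist S1 S2 (evcode S1 S2 L1) = (MIN m\<in>L1. (s - fst m) * (s - snd m))"
    unfolding L1 using in_Delta by (intro min_dist_evcode_rank_segment) auto
qed

lemma segment_codes_low_degree:
  fixes i j \<sigma> l :: nat
  assumes ij: "i + j = \<sigma>" "i \<le> j" "\<sigma> < s" "j + 1 = i + l"
  defines "L1 \<equiv> {N \<in> Delta s. deg_le N (i, j)}" and "L2 \<equiv> {N \<in> Delta s. deg_less N (j, i)}"
  shows "L2 \<subset> L1 \<and> L1 \<subseteq> Delta s \<and> card L1 - card L2 = l
        \<and> M1 S1 S2 (evcode S1 S2 L1) (evcode S1 S2 L2) = (s - i) * (s - j)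
        \<and> M1 S1 S2 (dual S1 S2 (evcode S1 S2 L2)) (dual S1 S2 (evcode S1 S2 L1)) \<ge> (i + 1) * (j + 1)
        \<and> (l + 1 \<le> \<sigma> \<longrightarrow>
             min_dist S1 S2 (evcode S1 S2 L1) = s * (s - \<sigma>)
             \<and> s * (s - \<sigma>) < M1 S1 S2 (evcode S1 S2 L1) (evcode S1 S2 L2))"
proof -
  have "i \<le> j" "j < s" using ij by auto
  note seg = antidiagonal_segment[OF this, folded L1_def L2_def]
  have min_eq: "(MIN m\<in>L1. (s - fst m) * (s - snd m)) = s * (s - \<sigma>)"
  proof (rule Min_image_eqI[where a = "(\<sigma>, 0)"])
    show "finite L1" using seg(2) by (rule finite_subset) simp
    show "(\<sigma>, 0) \<in> L1" using ij by (auto simp: L1_def Delta_def deg_le_def deg_less_def)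
    fix m assume "m \<in> L1"
    then have "fst m + snd m \<le> \<sigma>" using ij by (auto simp: L1_def deg_le_def deg_less_def)
    then have "s * (s - \<sigma>) \<le> s * (s - (fst m + snd m)) + fst m * snd m"
      by (intro trans_le_add1 mult_le_mono2 diff_le_mono2)
    also have "\<dots> = (s - fst m) * (s - snd m)"
      using \<open>fst m + snd m \<le> \<sigma>\<close> ij(3) by (simp add: diff_mult_diff_eq)
    finally show "s * (s - \<sigma>) \<le> (s - fst m) * (s - snd m)" .
  qed simp
  have "s * (s - \<sigma>) < (s - i) * (s - j)" if "l + 1 \<le> \<sigma>"
  proof -
    have "0 < i * j" using that ij by simp
    then show ?thesis using ij(1,3) diff_mult_diff_eq[of i j s] by simp
  qed
  then have "l + 1 \<le> \<sigma> \<longrightarrow> min_dist S1 S2 (evcode S1 S2 L1) = s * (s - \<sigma>)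
             \<and> s * (s - \<sigma>) < M1 S1 S2 (evcode S1 S2 L1) (evcode S1 S2 L2)"
    using seg(4,6) min_eq by simp
  moreover have "card L1 - card L2 = l" using seg(3) ij(2,4) by linarith
  ultimately show ?thesis using seg(1,2,4,5) by blast
qed

lemma segment_codes_high_degree:
  fixes i j \<sigma> l :: nat
  assumes ij: "i + j = \<sigma>" "i \<le> j" "\<sigma> < s" "j + 1 = i + l"
  shows "\<exists>L1 L2. L2 \<subset> L1 \<and> L1 \<subseteq> Delta s \<and> card L1 - card L2 = l
        \<and> M1 S1 S2 (evcode S1 S2 L1) (evcode S1 S2 L2) = (i + 1) * (j + 1)
        \<and> M1 S1 S2 (dual S1 S2 (evcode S1 S2 L2)) (dual S1 S2 (evcode S1 S2 L1)) \<ge> (s - i) * (s - j)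
        \<and> (l + 1 \<le> \<sigma> \<longrightarrow>
             min_dist S1 S2 (evcode S1 S2 L1) = \<sigma> + 1
             \<and> \<sigma> + 1 < M1 S1 S2 (evcode S1 S2 L1) (evcode S1 S2 L2))"
proof -
  \<comment> \<open>the mirror image of the first construction under a \<mapsto> s - 1 - a\<close>
  define a b where "a = s - 1 - j" and "b = s - 1 - i"
  define L1 where "L1 = {N \<in> Delta s. deg_le N (a, b)}"
  define L2 where "L2 = {N \<in> Delta s. deg_less N (b, a)}"
  have "a \<le> b" "b < s" using ij by (auto simp: a_def b_def)
  note seg = antidiagonal_segment[OF this, folded L1_def L2_def]
  have min_eq: "(MIN m\<in>L1. (s - fst m) * (s - snd m)) = \<sigma> + 1"
  proof (rule Min_image_eqI[where a = "(s - 1, s - 1 - \<sigma>)"])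
    show "finite L1" using seg(2) by (rule finite_subset) simp
    show "(s - 1, s - 1 - \<sigma>) \<in> L1"
      using ij by (auto simp: L1_def a_def b_def Delta_def deg_le_def deg_less_def)
    fix m assume m: "m \<in> L1"
    then have "fst m + snd m + \<sigma> + 2 \<le> 2 * s" "fst m < s" "snd m < s"
      using ij by (auto simp: L1_def a_def b_def Delta_def deg_le_def deg_less_def)
    moreover from this have "s - fst m + (s - snd m) \<le> (s - fst m) * (s - snd m) + 1"
      by (intro add_le_mult_add_one) auto
    ultimately show "\<sigma> + 1 \<le> (s - fst m) * (s - snd m)"
      using ij by simp
  qed (use ij in simp)
  have "\<sigma> + 1 < (i + 1) * (j + 1)" if "l + 1 \<le> \<sigma>"
  proof -
    have "(i + 1) * (j + 1) = i * j + (i + j) + 1" by (simp add: algebra_simps)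
    moreover have "0 < i * j" using that ij by simp
    ultimately show ?thesis using ij(1) by linarith
  qed
  moreover have "M1 S1 S2 (evcode S1 S2 L1) (evcode S1 S2 L2) = (i + 1) * (j + 1)"
  proof -
    have "s - a = j + 1" "s - b = i + 1" using ij by (auto simp: a_def b_def)
    with seg(4) show ?thesis by (simp only: mult.commute)
  qed
  moreover have "(s - i) * (s - j) \<le> M1 S1 S2 (dual S1 S2 (evcode S1 S2 L2)) (dual S1 S2 (evcode S1 S2 L1))"
  proof -
    have "a + 1 = s - j" "b + 1 = s - i" using ij by (auto simp: a_def b_def)
    with seg(5) show ?thesis by (simp only: mult.commute)
  qed
  moreover have "card L1 - card L2 = l"
  proof -
    have "b - a + 1 = l" using ij by (auto simp: a_def b_def)
    with seg(3) show ?thesis by simp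
  qed
  ultimately show ?thesis
    using seg(1,2,6) min_eq by (intro exI[of _ L1] exI[of _ L2]) auto
qed

end

theorem mainTheorem6:
  fixes S1 S2 :: "'a::{field, finite} set"
    and s \<sigma> l :: nat
  assumes "card S1 = s" and "card S2 = s"
    and "\<sigma> < s"
    and "0 < l" and "l \<le> \<sigma> + 1"
    and "even l \<longleftrightarrow> odd \<sigma>"
  shows
   "(let i = (\<sigma> + 1 - l) div 2; j = (\<sigma> + l - 1) div 2;
         L1 = {N \<in> Delta s. deg_le N (i, j)};
         L2 = {N \<in> Delta s. deg_less N (j, i)}
     in L2 \<subset> L1 \<and> L1 \<subseteq> Delta s \<and> card L1 - card L2 = l
        \<and> M1 S1 S2 (evcode S1 S2 L1) (evcode S1 S2 L2)
            = (s - (\<sigma> + 1 - l) div 2) * (s - (\<sigma> + l - 1) div 2)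
        \<and> M1 S1 S2 (dual S1 S2 (evcode S1 S2 L2)) (dual S1 S2 (evcode S1 S2 L1))
            \<ge> ((\<sigma> + 3 - l) div 2) * ((\<sigma> + l + 1) div 2)
        \<and> (l + 1 \<le> \<sigma> \<longrightarrow>
             min_dist S1 S2 (evcode S1 S2 L1) = s * (s - \<sigma>)
             \<and> s * (s - \<sigma>) < M1 S1 S2 (evcode S1 S2 L1) (evcode S1 S2 L2)))
   \<and> (\<exists>L1 L2. L2 \<subset> L1 \<and> L1 \<subseteq> Delta s \<and> card L1 - card L2 = l
        \<and> M1 S1 S2 (evcode S1 S2 L1) (evcode S1 S2 L2)
            = ((\<sigma> + 3 - l) div 2) * ((\<sigma> + l + 1) div 2)
        \<and> M1 S1 S2 (dual S1 S2 (evcode S1 S2 L2)) (dual S1 S2 (evcode S1 S2 L1))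
            \<ge> (s - (\<sigma> + 1 - l) div 2) * (s - (\<sigma> + l - 1) div 2)
        \<and> (l + 1 \<le> \<sigma> \<longrightarrow>
             min_dist S1 S2 (evcode S1 S2 L1) = \<sigma> + 1
             \<and> \<sigma> + 1 < M1 S1 S2 (evcode S1 S2 L1) (evcode S1 S2 L2)))"
proof -
  interpret grid S1 S2 s using assms by unfold_locales auto
  have "even (\<sigma> + 1 - l)" using assms(5,6) by (auto simp: even_diff_nat)
  then obtain i where "\<sigma> + 1 - l = 2 * i" by (rule evenE)
  then have i: "\<sigma> + 1 = 2 * i + l" using assms(5) by simp
  define j where "j = i + l - 1"
  have "(\<sigma> + 1 - l) div 2 = i" "(\<sigma> + l - 1) div 2 = j"
    and half: "(\<sigma> + 3 - l) div 2 = i + 1" "(\<sigma> + l + 1) div 2 = j + 1"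
    using i assms(4) by (simp_all add: j_def)
  have ij: "i + j = \<sigma>" "i \<le> j" "j + 1 = i + l"
    using i assms(4) by (simp_all add: j_def)
  note low = segment_codes_low_degree[OF ij(1,2) assms(3) ij(3)]
  note high = segment_codes_high_degree[OF ij(1,2) assms(3) ij(3)]
  show ?thesis
    unfolding Let_def \<open>(\<sigma> + 1 - l) div 2 = i\<close> \<open>(\<sigma> + l - 1) div 2 = j\<close> half
    by (rule conjI[OF low high])
qed

end
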